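(* Let $T\ge 1$ and $t\ge 1$ be integers and let $g_{T,t}:\mathbb{R}^{Tt}\to\mathbb{R}$ be the function defined in the context. Then: (1) the function $\mathbf{x}\mapsto g_{T,t}(\mathbf{y}-\mathbf{x})$ is a zero-chain; (2) $\mathbf{0}$ is a minimizer of $g_{T,t}$, $\inf_{\mathbf{x}} g_{T,t}(\mathbf{x}) = 0$, and $g_{T,t}(\mathbf{x})\le \frac12\mathbf{x}^\top(\mathbf{B}+\mathbf{I})\mathbf{x}$ for all $\mathbf{x}\in\mathbb{R}^{Tt}$; (3) $g_{T,t}$ is $37$-smooth; (4) there is a universal constant $C_3>0$ (independent of $T$ and $t$) such that $g_{T,t}$ satisfies the $\frac{1}{C_3T}$-PL condition.
   Context: A differentiable $f:\mathbb{R}^d\to\mathbb{R}$ is $L$-smooth if $\|\nabla f(\mathbf{x})-\nabla f(\mathbf{z})\|\le L\|\mathbf{x}-\mathbf{z}\|$ for all $\mathbf{x},\mathbf{z}$. It satisfies the $\mu$-PL condition ($\mu>0$) if $\|\nabla f(\mathbf{x})\|^2\ge 2\mu\,(f(\mathbf{x})-\inf_{\mathbf{z}} f(\mathbf{z}))$ for all $\mathbf{x}$. For $\mathbf{x}\in\mathbb{R}^d$, $\mathrm{supp}(\mathbf{x})=\{i:\mathbf{x}_i\neq 0\}$. A differentiable $f:\mathbb{R}^d\to\mathbb{R}$ is a zero-chain if for every $\mathbf{x}$ and every $k\in\{0,1,\dots,d\}$, $\mathrm{supp}(\mathbf{x})\subseteq\{1,\dots,k\}$ implies $\mathrm{supp}(\nabla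 f(\mathbf{x}))\subseteq\{1,\dots,k+1\}$. Construction. For a constant $y>0$ define $v_y:\mathbb{R}\to\mathbb{R}$ by $v_y(x)=\frac12x^2$ if $x\le\frac{31}{32}y$; $v_y(x)=\frac12x^2-16(x-\frac{31}{32}y)^2$ if $\frac{31}{32}y<x\le y$; $v_y(x)=\frac12x^2-\frac{y^2}{32}+16(x-\frac{33}{32}y)^2$ if $y<x\le\frac{33}{32}y$; $v_y(x)=\frac12x^2-\frac{y^2}{32}$ if $x>\frac{33}{32}y$. For $\mathbf{x}\in\mathbb{R}^{Tt}$, with the convention $\mathbf{x}_0=0$, let $$q_{T,t}(\mathbf{x})=\frac12\sum_{i=0}^{t-1}\Big[\big(\tfrac78\mathbf{x}_{iT}-\mathbf{x}_{iT+1}\big)^2+\sum_{j=1}^{T-1}(\mathbf{x}_{iT+j+1}-\mathbf{x}_{iT+j})^2\Big],$$ and let $\mathbf{B}$ be the symmetric positive semidefinite $Tt\times Tt$ matrix with $q_{T,t}(\mathbf{x})=\frac12\mathbf{x}^\top\mathbf{B}\mathbf{x}$. Let $\mathbf{y}\in\mathbb{R}^{Tt}$ be given by $\mathbf{y}_{qT+b}=(7/8)^q$ for $q\in\{0,\dots,t-1\}$, $b\in\{1,\dots,T\}$. Define $g_{T,t}(\mathbf{x})=q_{T,t}(\mathbf{x})+\sum_{i=1}^{Tt}v_{\mathbf{y}_i}(\mathbf{x}_i)$. *)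

theory Defs
  imports "HOL-Analysis.Analysis"
begin

text \<open>R^n is represented by functions nat => real supported on the index set {1..n}.\<close>

definition vecs :: "nat \<Rightarrow> (nat \<Rightarrow> real) set" where
  "vecs n = {x. \<forall>i. i \<notin> {1..n} \<longrightarrow> x i = 0}"

definition vnorm :: "nat \<Rightarrow> (nat \<Rightarrow> real) \<Rightarrow> real" where
  "vnorm n x = sqrt (\<Sum>i=1..n. (x i)^2)"

definition has_grad :: "nat \<Rightarrow> ((nat \<Rightarrow> real) \<Rightarrow> real) \<Rightarrow> (nat \<Rightarrow> real) \<Rightarrow> (nat \<Rightarrow> real) \<Rightarrow> bool" where
  "has_grad n f x G \<longleftrightarrow> G \<in> vecs n \<and>
     (\<forall>\<epsilon>>0. \<exists>\<delta>>0. \<forall>h\<in>vecs n. vnorm n h < \<delta> \<longrightarrow>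
        \<bar>f (\<lambda>i. x i + h i) - f x - (\<Sum>i=1..n. G i * h i)\<bar> \<le> \<epsilon> * vnorm n h)"

definition differentiable_Rn :: "nat \<Rightarrow> ((nat \<Rightarrow> real) \<Rightarrow> real) \<Rightarrow> bool" where
  "differentiable_Rn n f \<longleftrightarrow> (\<forall>x\<in>vecs n. \<exists>G. has_grad n f x G)"

definition grad :: "nat \<Rightarrow> ((nat \<Rightarrow> real) \<Rightarrow> real) \<Rightarrow> (nat \<Rightarrow> real) \<Rightarrow> (nat \<Rightarrow> real)" where
  "grad n f x = (SOME G. has_grad n f x G)"

definition L_smooth :: "nat \<Rightarrow> real \<Rightarrow> ((nat \<Rightarrow> real) \<Rightarrow> real) \<Rightarrow> bool" where
  "L_smooth n L f \<longleftrightarrow> differentiable_Rn n f \<and>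
     (\<forall>x\<in>vecs n. \<forall>z\<in>vecs n. vnorm n (\<lambda>i. grad n f x i - grad n f z i) \<le> L * vnorm n (\<lambda>i. x i - z i))"

definition PL_cond :: "nat \<Rightarrow> real \<Rightarrow> ((nat \<Rightarrow> real) \<Rightarrow> real) \<Rightarrow> bool" where
  "PL_cond n \<mu> f \<longleftrightarrow> \<mu> > 0 \<and> differentiable_Rn n f \<and>
     (\<forall>x\<in>vecs n. (vnorm n (grad n f x))^2 \<ge> 2 * \<mu> * (f x - (INF z\<in>vecs n. f z)))"

definition zero_chain :: "nat \<Rightarrow> ((nat \<Rightarrow> real) \<Rightarrow> real) \<Rightarrow> bool" where
  "zero_chain n f \<longleftrightarrow> differentiable_Rn n f \<and>
     (\<forall>x\<in>vecs n. \<forall>k\<le>n. {i. x i \<noteq> 0} \<subseteq> {1..k} \<longrightarrow> {i. grad n f x i \<noteq> 0} \<subseteq> {1..k+1})"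

definition vfun :: "real \<Rightarrow> real \<Rightarrow> real" where
  "vfun y x =
    (if x \<le> 31/32 * y then x^2/2
     else if x \<le> y then x^2/2 - 16 * (x - 31/32 * y)^2
     else if x \<le> 33/32 * y then x^2/2 - y^2/32 + 16 * (x - 33/32 * y)^2
     else x^2/2 - y^2/32)"

text \<open>q_{T,t}, with the convention x_0 = 0.\<close>
definition qfun :: "nat \<Rightarrow> nat \<Rightarrow> (nat \<Rightarrow> real) \<Rightarrow> real" where
  "qfun T t x = 1/2 * (\<Sum>i<t. ((7/8) * (if i = 0 then 0 else x (i*T)) - x (i*T+1))^2
        + (\<Sum>j=1..T-1. (x (i*T+j+1) - x (i*T+j))^2))"

definition yvec :: "nat \<Rightarrow> nat \<Rightarrow> nat \<Rightarrow> real" where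
  "yvec T t i = (if 1 \<le> i \<and> i \<le> T*t then (7/8::real)^((i-1) div T) else 0)"

definition gfun :: "nat \<Rightarrow> nat \<Rightarrow> (nat \<Rightarrow> real) \<Rightarrow> real" where
  "gfun T t x = qfun T t x + (\<Sum>i=1..T*t. vfun (yvec T t i) (x i))"

definition Bmat :: "nat \<Rightarrow> nat \<Rightarrow> nat \<Rightarrow> nat \<Rightarrow> real" where
  "Bmat T t = (THE B. (\<forall>i j. B i j = B j i)
      \<and> (\<forall>i j. i \<notin> {1..T*t} \<or> j \<notin> {1..T*t} \<longrightarrow> B i j = 0)
      \<and> (\<forall>x\<in>vecs (T*t). 0 \<le> (\<Sum>i=1..T*t. \<Sum>j=1..T*t. x i * B i j * x j))
      \<and> (\<forall>x\<in>vecs (T*t). qfun T t x = 1/2 * (\<Sum>i=1..T*t. \<Sum>j=1..T*t. x i * B i j * x j)))"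

end

theory Submission
  imports Defs
begin

(* The gradient of g_{T,t} at x is A^T A x + (v'_{y_m}(x_m))_m, where (A x)_m = x_m - c_m x_{m-1}
   with c_m = 7/8 at the first index of each block of length T and c_m = 1 otherwise, so that
   q_{T,t}(x) = |A x|^2 / 2. Smoothness follows from |A| <= 2 and the 33-Lipschitz continuity of
   v'_y; the zero-chain property from (A y)_m = 0 for m >= 2 and v'_y(y) = 0.

   For the PL inequality let gamma = |grad g(x)|. Since v'_y(s) = s outside the window
   bump y = (31/32 y, 33/32 y) and v'_y(s) >= 0 inside it, <grad g(x), x> is at least |A x|^2
   plus the squares of the coordinates outside their windows, which gives g(x) = O(gamma^2)
   unless most of |x|^2 lies inside windows. If a is the first coordinate inside its window, the
   gradient equations force gamma >= y_a / 10, while the mass inside windows is at most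
   (33/32)^2 sum_{m >= a} y_m^2 = O(T y_a^2) by the geometric decay of y. *)

section \<open>The one-dimensional function v\<close>

definition bump :: "real \<Rightarrow> real set" where
  "bump y = {31/32 * y <..< 33/32 * y}"

definition vfun_deriv :: "real \<Rightarrow> real \<Rightarrow> real" where
  "vfun_deriv y x = x - 32 * (max (x - 31/32 * y) 0 - 2 * max (x - y) 0 + max (x - 33/32 * y) 0)"

(* Squared ramps max(s,0)^2 have the Lipschitz derivative 2 max(s,0); this form of v_y gives its
   derivative and Taylor remainder. *)
lemma vfun_eq_ramps:
  assumes "y > 0"
  shows "vfun y x = x\<^sup>2 / 2
    - 16 * ((max (x - 31/32 * y) 0)\<^sup>2 - 2 * (max (x - y) 0)\<^sup>2 + (max (x - 33/32 * y) 0)\<^sup>2)"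
  using assms by (auto simp: vfun_def max_def power2_eq_square algebra_simps)

lemma ramp_sq_remainder:
  fixes s b :: real
  defines "\<rho> \<equiv> (max (s + b) 0)\<^sup>2 - (max s 0)\<^sup>2 - 2 * max s 0 * b"
  shows "0 \<le> \<rho> \<and> \<rho> \<le> b\<^sup>2"
proof -
  consider "0 \<le> s" "0 \<le> s + b" | "0 \<le> s" "s + b < 0" | "s < 0" "0 \<le> s + b" | "s < 0" "s + b < 0"
    by linarith
  then show ?thesis
  proof cases
    case 2
    have "0 \<le> s * (- s - 2 * b)" using 2 by (intro mult_nonneg_nonneg) auto
    moreover have "0 \<le> (s + b)\<^sup>2" by simp
    ultimately show ?thesis using 2 by (simp add: \<rho>_def power2_eq_square algebra_simps)
  next
    case 3
    have "(s + b)\<^sup>2 \<le> b\<^sup>2" using 3 by (intro power_mono) auto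
    with 3 show ?thesis by (simp add: \<rho>_def)
  qed (simp_all add: \<rho>_def power2_eq_square algebra_simps)
qed

lemma vfun_taylor:
  assumes "y > 0"
  shows "\<bar>vfun y (x + b) - vfun y x - vfun_deriv y x * b\<bar> \<le> 33 * b\<^sup>2"
proof -
  define \<rho> where "\<rho> s = (max (s + b) 0)\<^sup>2 - (max s 0)\<^sup>2 - 2 * max s 0 * b" for s
  have bounds: "0 \<le> \<rho> s \<and> \<rho> s \<le> b\<^sup>2" for s
    unfolding \<rho>_def by (rule ramp_sq_remainder)
  have "vfun y (x + b) - vfun y x - vfun_deriv y x * b
      = b\<^sup>2 / 2 - 16 * (\<rho> (x - 31/32 * y) - 2 * \<rho> (x - y) + \<rho> (x - 33/32 * y))"
    unfolding vfun_eq_ramps[OF assms] vfun_deriv_def \<rho>_def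
    by (simp add: power2_eq_square algebra_simps)
  then show ?thesis
    using bounds[of "x - 31/32 * y"] bounds[of "x - y"] bounds[of "x - 33/32 * y"]
    by (simp add: abs_le_iff)
qed

lemma vfun_deriv_lipschitz:
  assumes "y > 0"
  shows "\<bar>vfun_deriv y a - vfun_deriv y b\<bar> \<le> 33 * \<bar>a - b\<bar>"
proof -
  define tent where "tent x = max (x - 31/32 * y) 0 - 2 * max (x - y) 0 + max (x - 33/32 * y) 0" for x
  have "\<bar>tent a - tent b\<bar> \<le> \<bar>a - b\<bar>"
    using assms unfolding tent_def by (auto simp: max_def abs_if split: if_splits)
  then show ?thesis unfolding vfun_deriv_def tent_def[symmetric] by (smt (verit))
qed

lemma vfun_deriv_outside_bump: "y > 0 \<Longrightarrow> x \<notin> bump y \<Longrightarrow> vfun_deriv y x = x"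
  by (auto simp: vfun_deriv_def bump_def max_def)

lemma vfun_deriv_nonneg_in_bump: "y > 0 \<Longrightarrow> x \<in> bump y \<Longrightarrow> 0 \<le> vfun_deriv y x"
  by (auto simp: vfun_deriv_def bump_def max_def)

lemma vfun_deriv_self: "y > 0 \<Longrightarrow> vfun_deriv y y = 0"
  by (simp add: vfun_deriv_def max_def)

lemma vfun_nonneg:
  assumes "y > 0"
  shows "0 \<le> vfun y x"
proof -
  consider "x \<le> 31/32 * y" | "31/32 * y < x" "x \<le> y" | "y < x" by linarith
  then show ?thesis
  proof cases
    case 2
    have "16 * (x - 31/32 * y)\<^sup>2 \<le> 16 * (x / 31)\<^sup>2"
      using 2 assms by (intro mult_left_mono power_mono) auto
    also have "\<dots> \<le> x\<^sup>2 / 2" by (simp add: power_divide)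
    finally show ?thesis using 2 by (simp add: vfun_def)
  next
    case 3
    have "y\<^sup>2 \<le> x\<^sup>2" using 3 assms by (intro power_mono) auto
    moreover have "x\<^sup>2 / 2 - y\<^sup>2 / 32 \<le> vfun y x" using 3 by (simp add: vfun_def)
    ultimately show ?thesis using zero_le_power2[of y] by linarith
  qed (simp add: vfun_def)
qed

lemma vfun_le_half_sq:
  assumes "y > 0"
  shows "vfun y x \<le> x\<^sup>2 / 2"
proof -
  have "16 * (x - 33/32 * y)\<^sup>2 \<le> y\<^sup>2 / 32" if "y < x" "x \<le> 33/32 * y"
  proof -
    have "(x - 33/32 * y)\<^sup>2 \<le> (y / 32)\<^sup>2"
      using that assms by (subst abs_le_square_iff[symmetric]) auto
    then have "16 * (x - 33/32 * y)\<^sup>2 \<le> 16 * (y / 32)\<^sup>2" by simp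
    also have "\<dots> \<le> y\<^sup>2 / 32" by (simp add: power_divide)
    finally show ?thesis .
  qed
  then show ?thesis by (auto simp: vfun_def)
qed

section \<open>Bidiagonal operators\<close>

lemma sum_shift_pred_le:
  fixes f :: "nat \<Rightarrow> real"
  assumes "f 0 = 0" "\<And>m. 0 \<le> f m"
  shows "(\<Sum>m=1..n. f (m - 1)) \<le> (\<Sum>m=1..n. f m)"
proof -
  have "(\<Sum>m=1..n. f (m - 1)) = (\<Sum>m=1..n. f m) - f n"
    using assms(1) by (induction n) (auto simp: sum.cl_ivl_Suc)
  then show ?thesis using assms(2)[of n] by simp
qed

lemma sum_shift_succ_le:
  fixes f :: "nat \<Rightarrow> real"
  assumes "\<And>m. 0 \<le> f m"
  shows "(\<Sum>m=1..n. if m < n then f (Suc m) else 0) \<le> (\<Sum>m=1..n. f m)"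
proof (induction n)
  case (Suc n)
  have "(\<Sum>m=1..Suc n. if m < Suc n then f (Suc m) else 0)
      \<le> (\<Sum>m=1..n. if m < n then f (Suc m) else 0) + f (Suc n)"
    using assms by (cases n) (simp_all add: sum.cl_ivl_Suc)
  then show ?case using Suc by (simp add: sum.cl_ivl_Suc)
qed simp

lemma sq_diff_mult_le:
  fixes a b c :: real
  assumes "\<bar>c\<bar> \<le> 1"
  shows "(a - c * b)\<^sup>2 \<le> 2 * a\<^sup>2 + 2 * b\<^sup>2"
proof -
  have "(c * b)\<^sup>2 \<le> b\<^sup>2"
    using assms by (simp add: power_mult_distrib abs_square_le_1 mult_left_le_one_le)
  moreover have "0 \<le> (a + c * b)\<^sup>2" by simp
  ultimately show ?thesis by (simp add: power2_eq_square algebra_simps)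
qed

definition bidiag :: "(nat \<Rightarrow> real) \<Rightarrow> (nat \<Rightarrow> real) \<Rightarrow> nat \<Rightarrow> real" where
  "bidiag c x m = x m - c m * x (m - 1)"

definition bidiag_adj :: "(nat \<Rightarrow> real) \<Rightarrow> nat \<Rightarrow> (nat \<Rightarrow> real) \<Rightarrow> nat \<Rightarrow> real" where
  "bidiag_adj c n r m = r m - (if m < n then c (Suc m) * r (Suc m) else 0)"

lemma sum_sq_bidiag_le:
  assumes "\<And>m. \<bar>c m\<bar> \<le> 1" "h 0 = 0"
  shows "(\<Sum>m=1..n. (bidiag c h m)\<^sup>2) \<le> 4 * (\<Sum>m=1..n. (h m)\<^sup>2)"
proof -
  have "(\<Sum>m=1..n. (bidiag c h m)\<^sup>2) \<le> (\<Sum>m=1..n. 2 * (h m)\<^sup>2 + 2 * (h (m - 1))\<^sup>2)"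
    unfolding bidiag_def by (intro sum_mono sq_diff_mult_le assms)
  also have "\<dots> = 2 * (\<Sum>m=1..n. (h m)\<^sup>2) + 2 * (\<Sum>m=1..n. (h (m - 1))\<^sup>2)"
    by (simp add: sum.distrib sum_distrib_left)
  also have "(\<Sum>m=1..n. (h (m - 1))\<^sup>2) \<le> (\<Sum>m=1..n. (h m)\<^sup>2)"
    using sum_shift_pred_le[of "\<lambda>m. (h m)\<^sup>2"] assms(2) by simp
  finally show ?thesis by simp
qed

lemma sum_sq_bidiag_adj_le:
  assumes "\<And>m. \<bar>c m\<bar> \<le> 1"
  shows "(\<Sum>m=1..n. (bidiag_adj c n r m)\<^sup>2) \<le> 4 * (\<Sum>m=1..n. (r m)\<^sup>2)"
proof -
  have "(\<Sum>m=1..n. (bidiag_adj c n r m)\<^sup>2)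
      \<le> (\<Sum>m=1..n. 2 * (r m)\<^sup>2 + 2 * (if m < n then (r (Suc m))\<^sup>2 else 0))"
    unfolding bidiag_adj_def
    by (intro sum_mono) (use sq_diff_mult_le[OF assms] in auto)
  also have "\<dots> = 2 * (\<Sum>m=1..n. (r m)\<^sup>2) + 2 * (\<Sum>m=1..n. if m < n then (r (Suc m))\<^sup>2 else 0)"
    by (simp add: sum.distrib sum_distrib_left)
  also have "(\<Sum>m=1..n. if m < n then (r (Suc m))\<^sup>2 else 0) \<le> (\<Sum>m=1..n. (r m)\<^sup>2)"
    using sum_shift_succ_le[of "\<lambda>m. (r m)\<^sup>2"] by simp
  finally show ?thesis by simp
qed

lemma bidiag_add: "bidiag c (\<lambda>i. x i + h i) = (\<lambda>m. bidiag c x m + bidiag c h m)"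
  by (simp add: bidiag_def fun_eq_iff algebra_simps)

lemma bidiag_diff: "bidiag c (\<lambda>i. x i - h i) = (\<lambda>m. bidiag c x m - bidiag c h m)"
  by (simp add: bidiag_def fun_eq_iff algebra_simps)

lemma bidiag_adj_diff: "bidiag_adj c n (\<lambda>i. r i - s i) = (\<lambda>m. bidiag_adj c n r m - bidiag_adj c n s m)"
  by (simp add: bidiag_adj_def fun_eq_iff algebra_simps)

lemma sum_bidiag_adj:
  assumes "h 0 = 0"
  shows "(\<Sum>m=1..n. r m * bidiag c h m) = (\<Sum>m=1..n. bidiag_adj c n r m * h m)"
proof (induction n)
  case (Suc n)
  have "(\<Sum>m=1..Suc n. bidiag_adj c (Suc n) r m * h m)
      = (\<Sum>m=1..n. bidiag_adj c n r m * h m) - c (Suc n) * r (Suc n) * h n + r (Suc n) * h (Suc n)"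
    using assms by (cases n) (simp_all add: bidiag_adj_def sum.distrib algebra_simps)
  then show ?case using Suc by (simp add: bidiag_def algebra_simps)
qed simp

definition chain_coeff :: "nat \<Rightarrow> nat \<Rightarrow> real" where
  "chain_coeff T m = (if (m - 1) mod T = 0 then 7/8 else 1)"

lemma abs_chain_coeff_le_1: "\<bar>chain_coeff T m\<bar> \<le> 1"
  by (simp add: chain_coeff_def)

lemma sum_blocks:
  fixes f :: "nat \<Rightarrow> 'a::comm_monoid_add"
  shows "(\<Sum>m=1..T*t. f m) = (\<Sum>i<t. \<Sum>b=1..T. f (i*T + b))"
proof (induction t)
  case (Suc t)
  have "{1..T * Suc t} = {1..T*t} \<union> {T*t + 1..T*t + T}" by auto
  then have "(\<Sum>m=1..T * Suc t. f m) = (\<Sum>m=1..T*t. f m) + (\<Sum>m=T*t + 1..T*t + T. f m)"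
    by (simp add: sum.union_disjoint)
  also have "(\<Sum>m=T*t + 1..T*t + T. f m) = (\<Sum>b=1..T. f (t*T + b))"
    using sum.shift_bounds_cl_nat_ivl[of f 1 "T*t" T] by (simp add: algebra_simps)
  finally show ?case using Suc by simp
qed simp

lemma qfun_eq_bidiag:
  assumes "T \<ge> 1" "x 0 = 0"
  shows "qfun T t x = 1/2 * (\<Sum>m=1..T*t. (bidiag (chain_coeff T) x m)\<^sup>2)"
proof -
  have block: "(\<Sum>b=1..T. (bidiag (chain_coeff T) x (i*T + b))\<^sup>2)
      = (7/8 * (if i = 0 then 0 else x (i*T)) - x (i*T + 1))\<^sup>2
        + (\<Sum>j=1..T-1. (x (i*T + j + 1) - x (i*T + j))\<^sup>2)" for i
  proof -
    have "(\<Sum>b=1..T. (bidiag (chain_coeff T) x (i*T + b))\<^sup>2)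
        = (bidiag (chain_coeff T) x (i*T + 1))\<^sup>2 + (\<Sum>j=1..T-1. (bidiag (chain_coeff T) x (i*T + j + 1))\<^sup>2)"
      using assms(1) sum.shift_bounds_cl_Suc_ivl[of "\<lambda>b. (bidiag (chain_coeff T) x (i*T + b))\<^sup>2" 1 "T - 1"]
      by (simp add: sum.atLeast_Suc_atMost numeral_2_eq_2)
    moreover have "bidiag (chain_coeff T) x (i*T + 1) = x (i*T + 1) - 7/8 * (if i = 0 then 0 else x (i*T))"
      using assms(2) by (simp add: bidiag_def chain_coeff_def)
    moreover have "bidiag (chain_coeff T) x (i*T + j + 1) = x (i*T + j + 1) - x (i*T + j)"
      if "j \<in> {1..T-1}" for j
    proof -
      have "j mod T = j" using that by (intro mod_less) auto
      with that show ?thesis by (simp add: bidiag_def chain_coeff_def)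
    qed
    ultimately show ?thesis by (simp add: power2_commute)
  qed
  show ?thesis unfolding qfun_def sum_blocks block ..
qed

lemma yvec_pos: "m \<in> {1..T*t} \<Longrightarrow> 0 < yvec T t m"
  by (simp add: yvec_def)

lemma yvec_Suc:
  assumes "1 \<le> m" "m < T*t"
  shows "yvec T t (Suc m) = chain_coeff T (Suc m) * yvec T t m"
  using assms by (cases m) (auto simp: yvec_def chain_coeff_def div_Suc)

lemma bidiag_yvec: "2 \<le> m \<Longrightarrow> m \<le> T*t \<Longrightarrow> bidiag (chain_coeff T) (yvec T t) m = 0"
  using yvec_Suc[of "m - 1" T t] by (simp add: bidiag_def)

lemma vnorm_eq_L2_set: "vnorm n x = L2_set x {1..n}"
  by (simp add: vnorm_def L2_set_def)

lemma vnorm_nonneg: "0 \<le> vnorm n x"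
  by (simp add: vnorm_eq_L2_set)

lemma vnorm_sq: "(vnorm n x)\<^sup>2 = (\<Sum>i=1..n. (x i)\<^sup>2)"
  by (simp add: vnorm_def sum_nonneg)

lemma vnorm_le_of_sum_sq_le:
  assumes "(\<Sum>i=1..n. (a i)\<^sup>2) \<le> K\<^sup>2 * (\<Sum>i=1..n. (b i)\<^sup>2)" "0 \<le> K"
  shows "vnorm n a \<le> K * vnorm n b"
proof -
  have "vnorm n a \<le> sqrt (K\<^sup>2 * (\<Sum>i=1..n. (b i)\<^sup>2))"
    unfolding vnorm_def using assms(1) by (rule real_sqrt_le_mono)
  also have "\<dots> = K * vnorm n b" using assms(2) by (simp add: vnorm_def real_sqrt_mult)
  finally show ?thesis .
qed

lemma abs_le_vnorm:
  assumes "m \<in> {1..n}"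
  shows "\<bar>x m\<bar> \<le> vnorm n x"
proof -
  have "(x m)\<^sup>2 \<le> (\<Sum>i=1..n. (x i)\<^sup>2)" using assms by (intro member_le_sum) auto
  then show ?thesis unfolding vnorm_def by (metis real_sqrt_abs real_sqrt_le_mono)
qed

lemma vecs_0: "x \<in> vecs n \<Longrightarrow> x 0 = 0"
  by (simp add: vecs_def)

lemma has_gradI_quadratic_remainder:
  assumes "G \<in> vecs n"
    and remainder: "\<And>h. h \<in> vecs n \<Longrightarrow>
      \<bar>f (\<lambda>i. x i + h i) - f x - (\<Sum>i=1..n. G i * h i)\<bar> \<le> K * (vnorm n h)\<^sup>2"
  shows "has_grad n f x G"
  unfolding has_grad_def
proof (intro conjI assms allI impI)
  fix \<epsilon> :: real assume "\<epsilon> > 0"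
  show "\<exists>\<delta>>0. \<forall>h\<in>vecs n. vnorm n h < \<delta> \<longrightarrow>
      \<bar>f (\<lambda>i. x i + h i) - f x - (\<Sum>i=1..n. G i * h i)\<bar> \<le> \<epsilon> * vnorm n h"
  proof (intro exI[of _ "\<epsilon> / (\<bar>K\<bar> + 1)"] conjI ballI impI)
    fix h assume h: "h \<in> vecs n" "vnorm n h < \<epsilon> / (\<bar>K\<bar> + 1)"
    have "(\<bar>K\<bar> + 1) * vnorm n h \<le> \<epsilon>"
      using h(2) by (simp add: field_simps add_pos_nonneg)
    then have "\<bar>K\<bar> * vnorm n h * vnorm n h \<le> \<epsilon> * vnorm n h"
      using vnorm_nonneg[of n h] by (intro mult_right_mono) (auto simp: algebra_simps)
    moreover have "K * (vnorm n h)\<^sup>2 \<le> \<bar>K\<bar> * vnorm n h * vnorm n h"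
      using mult_right_mono[OF abs_ge_self zero_le_power2[of "vnorm n h"]]
      by (simp add: power2_eq_square mult.assoc)
    ultimately show "\<bar>f (\<lambda>i. x i + h i) - f x - (\<Sum>i=1..n. G i * h i)\<bar> \<le> \<epsilon> * vnorm n h"
      using remainder[OF h(1)] by linarith
  qed (use \<open>\<epsilon> > 0\<close> in simp)
qed

lemma has_grad_unique:
  assumes G1: "has_grad n f x G1" and G2: "has_grad n f x G2"
  shows "G1 = G2"
proof -
  define D where "D i = G1 i - G2 i" for i
  define d where "d = vnorm n D"
  have "d = 0"
  proof (rule ccontr)
    assume "d \<noteq> 0"
    then have "d > 0" using vnorm_nonneg[of n D] by (simp add: d_def)
    then have "d/4 > 0" by simp
    then obtain \<delta>1 \<delta>2 where \<delta>: "\<delta>1 > 0" "\<delta>2 > 0"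
      and R1: "\<forall>h\<in>vecs n. vnorm n h < \<delta>1 \<longrightarrow>
        \<bar>f (\<lambda>i. x i + h i) - f x - (\<Sum>i=1..n. G1 i * h i)\<bar> \<le> d/4 * vnorm n h"
      and R2: "\<forall>h\<in>vecs n. vnorm n h < \<delta>2 \<longrightarrow>
        \<bar>f (\<lambda>i. x i + h i) - f x - (\<Sum>i=1..n. G2 i * h i)\<bar> \<le> d/4 * vnorm n h"
      using G1 G2 unfolding has_grad_def by blast
    define s where "s = min \<delta>1 \<delta>2 / (2 * d)"
    define h where "h = (\<lambda>i. s * D i)"
    have "s > 0" using \<delta> \<open>d > 0\<close> by (simp add: s_def)
    have h_vec: "h \<in> vecs n"
      using G1 G2 by (auto simp: has_grad_def vecs_def h_def D_def)
    have h_norm: "vnorm n h = s * d"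
      using \<open>s > 0\<close> by (simp add: h_def d_def vnorm_eq_L2_set L2_set_right_distrib[symmetric])
    then have "vnorm n h < \<delta>1" "vnorm n h < \<delta>2"
      using \<delta> \<open>d > 0\<close> by (auto simp: s_def)
    with R1 R2 h_vec
    have "\<bar>f (\<lambda>i. x i + h i) - f x - (\<Sum>i=1..n. G1 i * h i)\<bar> \<le> d/4 * vnorm n h"
      and "\<bar>f (\<lambda>i. x i + h i) - f x - (\<Sum>i=1..n. G2 i * h i)\<bar> \<le> d/4 * vnorm n h"
      by blast+
    then have "(\<Sum>i=1..n. G1 i * h i) - (\<Sum>i=1..n. G2 i * h i) \<le> d/2 * vnorm n h"
      unfolding abs_le_iff by linarith
    moreover have "(\<Sum>i=1..n. G1 i * h i) - (\<Sum>i=1..n. G2 i * h i) = s * d\<^sup>2"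
      unfolding d_def vnorm_sq
      by (simp add: h_def D_def sum_subtractf[symmetric] sum_distrib_left power2_eq_square algebra_simps)
    ultimately have "s * d * d \<le> s * d * d / 2"
      using h_norm by (simp add: power2_eq_square mult_ac)
    then show False using \<open>s > 0\<close> \<open>d > 0\<close> by simp
  qed
  then have "\<forall>i\<in>{1..n}. D i = 0" by (simp add: d_def vnorm_eq_L2_set L2_set_eq_0_iff)
  then show ?thesis using G1 G2 by (auto simp: has_grad_def vecs_def D_def fun_eq_iff)
qed

lemma grad_eqI: "has_grad n f x G \<Longrightarrow> grad n f x = G"
  unfolding grad_def by (rule some_equality) (auto intro: has_grad_unique)

lemma has_grad_reflect:
  assumes "has_grad n f (\<lambda>i. w i - x i) G"
  shows "has_grad n (\<lambda>x. f (\<lambda>i. w i - x i)) x (\<lambda>i. - G i)"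
  unfolding has_grad_def
proof (intro conjI allI impI)
  show "(\<lambda>i. - G i) \<in> vecs n" using assms by (simp add: has_grad_def vecs_def)
  fix \<epsilon> :: real assume "\<epsilon> > 0"
  then obtain \<delta> where "\<delta> > 0" and R: "\<forall>h\<in>vecs n. vnorm n h < \<delta> \<longrightarrow>
      \<bar>f (\<lambda>i. (w i - x i) + h i) - f (\<lambda>i. w i - x i) - (\<Sum>i=1..n. G i * h i)\<bar> \<le> \<epsilon> * vnorm n h"
    using assms unfolding has_grad_def by blast
  have "\<bar>f (\<lambda>i. w i - (x i + h i)) - f (\<lambda>i. w i - x i) - (\<Sum>i=1..n. - G i * h i)\<bar> \<le> \<epsilon> * vnorm n h"
    if "h \<in> vecs n" "vnorm n h < \<delta>" for h
  proof -
    have "(\<lambda>i. - h i) \<in> vecs n" and norm_neg: "vnorm n (\<lambda>i. - h i) = vnorm n h"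
      using that(1) by (simp_all add: vecs_def vnorm_def)
    with R that(2) have "\<bar>f (\<lambda>i. (w i - x i) + - h i) - f (\<lambda>i. w i - x i) - (\<Sum>i=1..n. G i * - h i)\<bar>
        \<le> \<epsilon> * vnorm n h"
      by fastforce
    then show ?thesis by (simp add: sum_negf algebra_simps)
  qed
  with \<open>\<delta> > 0\<close> show "\<exists>\<delta>>0. \<forall>h\<in>vecs n. vnorm n h < \<delta> \<longrightarrow>
      \<bar>f (\<lambda>i. w i - (x i + h i)) - f (\<lambda>i. w i - x i) - (\<Sum>i=1..n. - G i * h i)\<bar> \<le> \<epsilon> * vnorm n h"
    by blast
qed

section \<open>Gradient and smoothness of g\<close>

definition gfun_grad :: "nat \<Rightarrow> nat \<Rightarrow> (nat \<Rightarrow> real) \<Rightarrow> nat \<Rightarrow> real" where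
  "gfun_grad T t x m = (if m \<in> {1..T*t}
     then bidiag_adj (chain_coeff T) (T*t) (bidiag (chain_coeff T) x) m + vfun_deriv (yvec T t m) (x m)
     else 0)"

lemma gfun_grad_vecs: "gfun_grad T t x \<in> vecs (T*t)"
  by (simp add: vecs_def gfun_grad_def)

lemma gfun_remainder:
  assumes "T \<ge> 1" "x 0 = 0" "h 0 = 0"
  shows "\<bar>gfun T t (\<lambda>i. x i + h i) - gfun T t x - (\<Sum>m=1..T*t. gfun_grad T t x m * h m)\<bar>
    \<le> 35 * (\<Sum>m=1..T*t. (h m)\<^sup>2)"
proof -
  let ?n = "T*t" and ?A = "bidiag (chain_coeff T)" and ?y = "yvec T t"
  define V where "V = (\<Sum>m=1..?n. vfun (?y m) (x m + h m) - vfun (?y m) (x m) - vfun_deriv (?y m) (x m) * h m)"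
  have quad: "qfun T t (\<lambda>i. x i + h i) - qfun T t x
      = (\<Sum>m=1..?n. ?A x m * ?A h m) + 1/2 * (\<Sum>m=1..?n. (?A h m)\<^sup>2)"
    using assms by (simp add: qfun_eq_bidiag bidiag_add power2_sum sum.distrib sum_distrib_left
        algebra_simps)
  have "(\<Sum>m=1..?n. gfun_grad T t x m * h m)
      = (\<Sum>m=1..?n. bidiag_adj (chain_coeff T) ?n (?A x) m * h m) + (\<Sum>m=1..?n. vfun_deriv (?y m) (x m) * h m)"
    by (simp add: gfun_grad_def sum.distrib[symmetric] algebra_simps)
  also have "(\<Sum>m=1..?n. bidiag_adj (chain_coeff T) ?n (?A x) m * h m) = (\<Sum>m=1..?n. ?A x m * ?A h m)"
    using sum_bidiag_adj[of h, OF assms(3)] by simp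
  finally have "gfun T t (\<lambda>i. x i + h i) - gfun T t x - (\<Sum>m=1..?n. gfun_grad T t x m * h m)
      = 1/2 * (\<Sum>m=1..?n. (?A h m)\<^sup>2) + V"
    using quad by (simp add: gfun_def V_def sum_subtractf)
  moreover have "0 \<le> (\<Sum>m=1..?n. (?A h m)\<^sup>2)" "(\<Sum>m=1..?n. (?A h m)\<^sup>2) \<le> 4 * (\<Sum>m=1..?n. (h m)\<^sup>2)"
    using sum_sq_bidiag_le[of "chain_coeff T" h, OF abs_chain_coeff_le_1 assms(3)]
    by (simp_all add: sum_nonneg)
  moreover have "\<bar>V\<bar> \<le> 33 * (\<Sum>m=1..?n. (h m)\<^sup>2)"
  proof -
    have "\<bar>V\<bar> \<le> (\<Sum>m=1..?n. \<bar>vfun (?y m) (x m + h m) - vfun (?y m) (x m) - vfun_deriv (?y m) (x m) * h m\<bar>)"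
      unfolding V_def by (rule sum_abs)
    also have "\<dots> \<le> (\<Sum>m=1..?n. 33 * (h m)\<^sup>2)"
      by (intro sum_mono vfun_taylor yvec_pos)
    finally show ?thesis by (simp add: sum_distrib_left)
  qed
  ultimately show ?thesis by (simp add: abs_le_iff)
qed

lemma has_grad_gfun:
  assumes "T \<ge> 1" "x \<in> vecs (T*t)"
  shows "has_grad (T*t) (gfun T t) x (gfun_grad T t x)"
proof (rule has_gradI_quadratic_remainder[OF gfun_grad_vecs])
  fix h assume "h \<in> vecs (T*t)"
  then show "\<bar>gfun T t (\<lambda>i. x i + h i) - gfun T t x - (\<Sum>i=1..T*t. gfun_grad T t x i * h i)\<bar>
      \<le> 35 * (vnorm (T*t) h)\<^sup>2"
    unfolding vnorm_sq using gfun_remainder[of T x h t] assms by (simp add: vecs_0)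
qed

lemma grad_gfun: "T \<ge> 1 \<Longrightarrow> x \<in> vecs (T*t) \<Longrightarrow> grad (T*t) (gfun T t) x = gfun_grad T t x"
  by (intro grad_eqI has_grad_gfun)

lemma differentiable_gfun: "T \<ge> 1 \<Longrightarrow> differentiable_Rn (T*t) (gfun T t)"
  unfolding differentiable_Rn_def using has_grad_gfun by blast

lemma gfun_L_smooth:
  assumes "T \<ge> 1"
  shows "L_smooth (T*t) 37 (gfun T t)"
  unfolding L_smooth_def
proof (intro conjI differentiable_gfun[OF assms] ballI)
  fix x z assume x: "x \<in> vecs (T*t)" and z: "z \<in> vecs (T*t)"
  let ?n = "T*t" and ?c = "chain_coeff T"
  define d where "d = (\<lambda>i. x i - z i)"
  define A where "A = (\<lambda>m. bidiag_adj ?c ?n (bidiag ?c d) m)"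
  define B where "B = (\<lambda>m. vfun_deriv (yvec T t m) (x m) - vfun_deriv (yvec T t m) (z m))"
  have "vnorm ?n (\<lambda>i. grad ?n (gfun T t) x i - grad ?n (gfun T t) z i) = vnorm ?n (\<lambda>m. A m + B m)"
    unfolding grad_gfun[OF assms x] grad_gfun[OF assms z] vnorm_eq_L2_set
    by (intro L2_set_cong) (auto simp: gfun_grad_def A_def B_def d_def bidiag_diff bidiag_adj_diff)
  also have "\<dots> \<le> vnorm ?n A + vnorm ?n B"
    unfolding vnorm_eq_L2_set by (rule L2_set_triangle_ineq)
  also have "vnorm ?n A \<le> 4 * vnorm ?n d"
  proof (rule vnorm_le_of_sum_sq_le)
    have "d 0 = 0" using x z by (simp add: d_def vecs_0)
    then show "(\<Sum>i=1..?n. (A i)\<^sup>2) \<le> 4\<^sup>2 * (\<Sum>i=1..?n. (d i)\<^sup>2)"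
      using sum_sq_bidiag_adj_le[where c="?c" and n="?n" and r="bidiag ?c d", OF abs_chain_coeff_le_1]
        sum_sq_bidiag_le[where c="?c" and h=d and n="?n", OF abs_chain_coeff_le_1]
      by (simp add: A_def)
  qed simp
  also have "vnorm ?n B \<le> 33 * vnorm ?n d"
  proof (rule vnorm_le_of_sum_sq_le)
    have "(B i)\<^sup>2 \<le> 33\<^sup>2 * (d i)\<^sup>2" if "i \<in> {1..?n}" for i
    proof -
      have "\<bar>B i\<bar> \<le> 33 * \<bar>d i\<bar>"
        using vfun_deriv_lipschitz[OF yvec_pos[OF that], of "x i" "z i"] by (simp add: B_def d_def)
      then have "\<bar>B i\<bar> \<le> \<bar>33 * d i\<bar>" by (simp add: abs_mult)
      then show ?thesis by (simp add: abs_le_square_iff power_mult_distrib)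
    qed
    then show "(\<Sum>i=1..?n. (B i)\<^sup>2) \<le> 33\<^sup>2 * (\<Sum>i=1..?n. (d i)\<^sup>2)"
      unfolding sum_distrib_left by (rule sum_mono)
  qed simp
  finally show "vnorm ?n (\<lambda>i. grad ?n (gfun T t) x i - grad ?n (gfun T t) z i) \<le> 37 * vnorm ?n (\<lambda>i. x i - z i)"
    by (simp add: d_def)
qed

section \<open>Minimum value, the matrix B and the quadratic upper bound\<close>

lemma gfun_nonneg: "0 \<le> gfun T t x"
  unfolding gfun_def qfun_def
  by (intro add_nonneg_nonneg mult_nonneg_nonneg sum_nonneg vfun_nonneg yvec_pos) auto

lemma gfun_zero: "gfun T t (\<lambda>_. 0) = 0"
proof -
  have "vfun (yvec T t i) 0 = 0" if "i \<in> {1..T*t}" for i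
    using yvec_pos[OF that] by (simp add: vfun_def)
  then show ?thesis by (simp add: gfun_def qfun_def)
qed

lemma gfun_INF: "(INF x\<in>vecs n. gfun T t x) = 0"
proof (rule cInf_eq_minimum)
  show "0 \<in> gfun T t ` vecs n"
    using gfun_zero by (intro image_eqI[where x="\<lambda>_. 0"]) (auto simp: vecs_def)
qed (auto simp: gfun_nonneg)

lemma double_sum_delta:
  fixes D :: "nat \<Rightarrow> nat \<Rightarrow> real"
  assumes "finite A" "k \<in> A" "l \<in> A"
  shows "(\<Sum>a\<in>A. \<Sum>b\<in>A. D a b * (of_bool (a = k) * of_bool (b = l))) = D k l"
  using assms
  by (simp add: of_bool_def if_distrib[of "\<lambda>x. D _ _ * x"] if_distrib[of "\<lambda>x. _ * x"] sum.delta
      cong: if_cong)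

lemma symmetric_quadratic_form_eq_0:
  fixes D :: "nat \<Rightarrow> nat \<Rightarrow> real"
  assumes sym: "\<And>i j. D i j = D j i"
    and form: "\<And>x. x \<in> vecs n \<Longrightarrow> (\<Sum>a=1..n. \<Sum>b=1..n. x a * D a b * x b) = 0"
    and "i \<in> {1..n}" "j \<in> {1..n}"
  shows "D i j = 0"
proof -
  have pair: "(\<Sum>a=1..n. \<Sum>b=1..n. (of_bool (a = k) + of_bool (a = l)) * D a b * (of_bool (b = k) + of_bool (b = l)))
      = D k k + D k l + D l k + D l l" if "k \<in> {1..n}" "l \<in> {1..n}" for k l
    using that by (simp add: algebra_simps sum.distrib double_sum_delta)
  have vec: "(\<lambda>a. of_bool (a = k) + of_bool (a = l) :: real) \<in> vecs n"
    if "k \<in> {1..n}" "l \<in> {1..n}" for k l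
    using that by (auto simp: vecs_def)
  have "D k k + D k l + D l k + D l l = 0" if "k \<in> {1..n}" "l \<in> {1..n}" for k l
    using form[OF vec[OF that]] pair[OF that] by simp
  from this[of i i] this[of j j] this[of i j] assms(3,4) sym[of i j] show ?thesis by simp
qed

definition bidiag_gram :: "nat \<Rightarrow> nat \<Rightarrow> nat \<Rightarrow> nat \<Rightarrow> real" where
  "bidiag_gram T t i j = (if i \<in> {1..T*t} \<and> j \<in> {1..T*t}
     then (\<Sum>m=1..T*t. bidiag (chain_coeff T) (\<lambda>k. of_bool (k = i)) m
                      * bidiag (chain_coeff T) (\<lambda>k. of_bool (k = j)) m)
     else 0)"

lemma sum_bidiag_basis:
  assumes "x 0 = 0" "m \<in> {1..n}"
  shows "(\<Sum>i=1..n. x i * bidiag c (\<lambda>k. of_bool (k = i)) m) = bidiag c x m"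
proof -
  have "(\<Sum>i=1..n. x i * bidiag c (\<lambda>k. of_bool (k = i)) m)
      = (\<Sum>i=1..n. (if i = m then x i else 0) - c m * (if i = m - 1 then x i else 0))"
    by (intro sum.cong refl) (auto simp: bidiag_def)
  also have "\<dots> = (\<Sum>i=1..n. if i = m then x i else 0) - c m * (\<Sum>i=1..n. if i = m - 1 then x i else 0)"
    by (simp only: sum_subtractf sum_distrib_left mult_if_delta)
  also have "\<dots> = bidiag c x m"
    using assms by (cases "m = 1") (auto simp: sum.delta bidiag_def)
  finally show ?thesis .
qed

lemma bidiag_gram_quadratic_form:
  assumes "x 0 = 0"
  shows "(\<Sum>i=1..T*t. \<Sum>j=1..T*t. x i * bidiag_gram T t i j * x j)
    = (\<Sum>m=1..T*t. (bidiag (chain_coeff T) x m)\<^sup>2)"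
proof -
  let ?I = "{1..T*t}" and ?a = "\<lambda>i m. x i * bidiag (chain_coeff T) (\<lambda>k. of_bool (k = i)) m"
  have "(\<Sum>i\<in>?I. \<Sum>j\<in>?I. x i * bidiag_gram T t i j * x j) = (\<Sum>i\<in>?I. \<Sum>j\<in>?I. \<Sum>m\<in>?I. ?a i m * ?a j m)"
    by (intro sum.cong refl) (simp add: bidiag_gram_def sum_distrib_left sum_distrib_right mult_ac)
  also have "\<dots> = (\<Sum>i\<in>?I. \<Sum>m\<in>?I. \<Sum>j\<in>?I. ?a i m * ?a j m)"
    by (intro sum.cong refl sum.swap)
  also have "\<dots> = (\<Sum>m\<in>?I. (\<Sum>i\<in>?I. ?a i m) * (\<Sum>j\<in>?I. ?a j m))"
    by (subst sum.swap) (simp add: sum_product)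
  also have "\<dots> = (\<Sum>m\<in>?I. (bidiag (chain_coeff T) x m)\<^sup>2)"
    using sum_bidiag_basis[of x, OF assms] by (simp add: power2_eq_square)
  finally show ?thesis .
qed

lemma bidiag_gram_unique:
  assumes "T \<ge> 1" and sym: "\<And>i j. B i j = B j i"
    and outside: "\<And>i j. i \<notin> {1..T*t} \<or> j \<notin> {1..T*t} \<Longrightarrow> B i j = 0"
    and rep: "\<And>x. x \<in> vecs (T*t) \<Longrightarrow> qfun T t x = 1/2 * (\<Sum>i=1..T*t. \<Sum>j=1..T*t. x i * B i j * x j)"
  shows "B = bidiag_gram T t"
proof -
  have "B i j - bidiag_gram T t i j = 0" if "i \<in> {1..T*t}" "j \<in> {1..T*t}" for i j
  proof (rule symmetric_quadratic_form_eq_0[where n="T*t"])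
    fix x assume x: "x \<in> vecs (T*t)"
    have "(\<Sum>a=1..T*t. \<Sum>b=1..T*t. x a * (B a b - bidiag_gram T t a b) * x b)
        = (\<Sum>a=1..T*t. \<Sum>b=1..T*t. x a * B a b * x b)
          - (\<Sum>a=1..T*t. \<Sum>b=1..T*t. x a * bidiag_gram T t a b * x b)"
      by (simp add: algebra_simps sum_subtractf)
    also have "\<dots> = 0"
      using rep[OF x] bidiag_gram_quadratic_form[where x=x, OF vecs_0[OF x]]
        qfun_eq_bidiag[where x=x, OF assms(1) vecs_0[OF x]]
      by simp
    finally show "(\<Sum>a=1..T*t. \<Sum>b=1..T*t. x a * (B a b - bidiag_gram T t a b) * x b) = 0" .
  qed (use that sym in \<open>auto simp: bidiag_gram_def mult.commute\<close>)
  with outside show ?thesis by (auto simp: fun_eq_iff bidiag_gram_def)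
qed

lemma Bmat_eq_bidiag_gram:
  assumes "T \<ge> 1"
  shows "Bmat T t = bidiag_gram T t"
  unfolding Bmat_def
proof (rule the_equality)
  show "(\<forall>i j. bidiag_gram T t i j = bidiag_gram T t j i)
      \<and> (\<forall>i j. i \<notin> {1..T*t} \<or> j \<notin> {1..T*t} \<longrightarrow> bidiag_gram T t i j = 0)
      \<and> (\<forall>x\<in>vecs (T*t). 0 \<le> (\<Sum>i=1..T*t. \<Sum>j=1..T*t. x i * bidiag_gram T t i j * x j))
      \<and> (\<forall>x\<in>vecs (T*t). qfun T t x = 1/2 * (\<Sum>i=1..T*t. \<Sum>j=1..T*t. x i * bidiag_gram T t i j * x j))"
  proof (intro conjI allI ballI impI)
    fix x assume "x \<in> vecs (T*t)"
    then have "x 0 = 0" by (rule vecs_0)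
    then have form: "(\<Sum>i=1..T*t. \<Sum>j=1..T*t. x i * bidiag_gram T t i j * x j)
        = (\<Sum>m=1..T*t. (bidiag (chain_coeff T) x m)\<^sup>2)"
      by (rule bidiag_gram_quadratic_form)
    show "0 \<le> (\<Sum>i=1..T*t. \<Sum>j=1..T*t. x i * bidiag_gram T t i j * x j)"
      unfolding form by (simp add: sum_nonneg)
    show "qfun T t x = 1/2 * (\<Sum>i=1..T*t. \<Sum>j=1..T*t. x i * bidiag_gram T t i j * x j)"
      unfolding form using assms \<open>x 0 = 0\<close> by (simp add: qfun_eq_bidiag)
  qed (auto simp: bidiag_gram_def mult.commute)
qed (use assms bidiag_gram_unique in blast)

lemma gfun_le_quadratic:
  assumes "T \<ge> 1" "x \<in> vecs (T*t)"
  shows "gfun T t x \<le> 1/2 * (\<Sum>i=1..T*t. \<Sum>j=1..T*t.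
    x i * (Bmat T t i j + (if i = j then 1 else 0)) * x j)"
proof -
  let ?I = "{1..T*t}"
  have "(\<Sum>i\<in>?I. \<Sum>j\<in>?I. x i * (Bmat T t i j + (if i = j then 1 else 0)) * x j)
      = (\<Sum>i\<in>?I. \<Sum>j\<in>?I. x i * bidiag_gram T t i j * x j) + (\<Sum>i\<in>?I. (x i)\<^sup>2)"
    by (simp add: Bmat_eq_bidiag_gram[OF assms(1)] algebra_simps sum.distrib
        if_distrib[of "\<lambda>u. _ * u"] sum.delta power2_eq_square cong: if_cong)
  also have "\<dots> = 2 * qfun T t x + (\<Sum>i\<in>?I. (x i)\<^sup>2)"
    using bidiag_gram_quadratic_form[where x=x and T=T and t=t, OF vecs_0[OF assms(2)]]
      qfun_eq_bidiag[where x=x and T=T and t=t, OF assms(1) vecs_0[OF assms(2)]]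
    by linarith
  finally have "(\<Sum>i\<in>?I. \<Sum>j\<in>?I. x i * (Bmat T t i j + (if i = j then 1 else 0)) * x j)
      = 2 * qfun T t x + (\<Sum>i\<in>?I. (x i)\<^sup>2)" .
  moreover have "(\<Sum>i\<in>?I. vfun (yvec T t i) (x i)) \<le> (\<Sum>i\<in>?I. (x i)\<^sup>2) / 2"
    unfolding sum_divide_distrib by (intro sum_mono vfun_le_half_sq yvec_pos)
  ultimately show ?thesis by (simp add: gfun_def)
qed

section \<open>The zero-chain property\<close>

lemma gfun_grad_eq_0_beyond:
  assumes "\<And>j. k < j \<Longrightarrow> z j = yvec T t j" "k + 2 \<le> i"
  shows "gfun_grad T t z i = 0"
proof (cases "i \<le> T*t")
  case True
  have "bidiag (chain_coeff T) z j = 0" if "i \<le> j" "j \<le> T*t" for j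
    using bidiag_yvec[of j T t] assms that by (simp add: bidiag_def)
  with True assms show ?thesis
    by (simp add: gfun_grad_def bidiag_adj_def vfun_deriv_self yvec_pos)
qed (simp add: gfun_grad_def)

lemma zero_chain_gfun_reflected:
  assumes "T \<ge> 1"
  shows "zero_chain (T*t) (\<lambda>x. gfun T t (\<lambda>i. yvec T t i - x i))"
  unfolding zero_chain_def differentiable_Rn_def
proof (intro conjI ballI allI impI subsetI)
  let ?n = "T*t" and ?f = "\<lambda>x. gfun T t (\<lambda>i. yvec T t i - x i)"
  have grad: "has_grad ?n ?f x (\<lambda>i. - gfun_grad T t (\<lambda>i. yvec T t i - x i) i)" if "x \<in> vecs ?n" for x
  proof (rule has_grad_reflect, rule has_grad_gfun[OF assms])
    show "(\<lambda>i. yvec T t i - x i) \<in> vecs ?n" using that by (simp add: vecs_def yvec_def)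
  qed
  fix x assume x: "x \<in> vecs ?n"
  with grad show "\<exists>G. has_grad ?n ?f x G" by blast
  fix k i assume supp: "{i. x i \<noteq> 0} \<subseteq> {1..k}" and "i \<in> {i. grad ?n ?f x i \<noteq> 0}"
  then have nonzero: "gfun_grad T t (\<lambda>i. yvec T t i - x i) i \<noteq> 0"
    using grad_eqI[OF grad[OF x]] by simp
  then have "1 \<le> i" by (auto simp: gfun_grad_def split: if_splits)
  moreover have "\<not> k + 2 \<le> i"
    using gfun_grad_eq_0_beyond[of k "\<lambda>i. yvec T t i - x i" T t i] supp nonzero by force
  ultimately show "i \<in> {1..k+1}" by simp
qed

section \<open>The PL inequality\<close>

lemma add_le_of_le_mult_sqrt:
  fixes E W \<gamma> M :: real
  assumes "0 \<le> E" "0 \<le> W" "E \<le> \<gamma> * sqrt (E + W)" "W \<le> M * \<gamma>\<^sup>2" "2 \<le> M"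
  shows "E + W \<le> 2 * M * \<gamma>\<^sup>2"
proof (cases "E \<le> W")
  case True
  then show ?thesis using assms(4) by simp
next
  case False
  have "E * E \<le> (\<gamma> * sqrt (E + W))\<^sup>2"
    using assms(1,3) by (simp add: mult_mono' power2_eq_square)
  also have "\<dots> = \<gamma>\<^sup>2 * (E + W)"
    using assms(1,2) by (simp add: power_mult_distrib)
  also have "\<dots> \<le> \<gamma>\<^sup>2 * (2 * E)"
    using False by (intro mult_left_mono) auto
  finally have "E * E \<le> (2 * \<gamma>\<^sup>2) * E" by simp
  then have "E \<le> 2 * \<gamma>\<^sup>2"
    using False assms(2) by (simp add: mult_le_cancel_right)
  moreover have "4 * \<gamma>\<^sup>2 \<le> 2 * M * \<gamma>\<^sup>2"
    using assms(5) by (intro mult_right_mono) auto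
  ultimately show ?thesis using False by linarith
qed

(* The gradient equations of g at x in abstract form: c are the chain coefficients, u stands for
   (v'_{y_m}(x_m))_m and gamma bounds |grad g(x)|. *)
locale chain_gradient =
  fixes n :: nat and c x u G y :: "nat \<Rightarrow> real" and \<gamma> :: real
  assumes x_0: "x 0 = 0"
    and coeff_bounds: "\<And>m. 7/8 \<le> c m \<and> c m \<le> 1"
    and gradient: "\<And>m. m \<in> {1..n} \<Longrightarrow> G m = bidiag_adj c n (bidiag c x) m + u m"
    and gradient_norm: "vnorm n G \<le> \<gamma>"
    and y_pos: "\<And>m. m \<in> {1..n} \<Longrightarrow> 0 < y m"
    and y_Suc: "\<And>m. m \<in> {1..<n} \<Longrightarrow> y (Suc m) = c (Suc m) * y m"
    and u_outside_bump: "\<And>m. m \<in> {1..n} \<Longrightarrow> x m \<notin> bump (y m) \<Longrightarrow> u m = x m"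
    and u_in_bump: "\<And>m. m \<in> {1..n} \<Longrightarrow> x m \<in> bump (y m) \<Longrightarrow> 0 \<le> u m"
begin

lemma gamma_nonneg: "0 \<le> \<gamma>"
  using vnorm_nonneg gradient_norm by (rule order_trans)

lemma abs_gradient_le: "m \<in> {1..n} \<Longrightarrow> \<bar>G m\<bar> \<le> \<gamma>"
  using abs_le_vnorm gradient_norm by (rule order_trans)

lemma gradient_last: "1 \<le> n \<Longrightarrow> G n = bidiag c x n + u n"
  using gradient[of n] by (simp add: bidiag_adj_def)

lemma coeff_mult_bidiag_Suc:
  "m \<in> {1..<n} \<Longrightarrow> c (Suc m) * bidiag c x (Suc m) = bidiag c x m + u m - G m"
  using gradient[of m] by (simp add: bidiag_adj_def)

lemma coeff_mult_le:
  assumes "z \<le> \<gamma> + c m * X / 2" "0 \<le> X"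
  shows "c m * z \<le> \<gamma> + X / 2"
proof -
  have c: "0 \<le> c m" "c m \<le> 1" using coeff_bounds[of m] by auto
  then have "c m * z \<le> c m * (\<gamma> + c m * X / 2)" using assms(1) by (simp add: mult_left_mono)
  also have "\<dots> = c m * \<gamma> + c m * c m * X / 2" by (simp add: algebra_simps)
  also have "\<dots> \<le> \<gamma> + X / 2"
    using c assms(2) gamma_nonneg
    by (intro add_mono divide_right_mono mult_left_le_one_le mult_le_one) auto
  finally show ?thesis .
qed

lemma backward_bound:
  assumes "a \<le> n" and below: "\<And>m. m \<in> {1..<a} \<Longrightarrow> u m = x m" and "k < a"
  shows "x k \<le> \<gamma> + max (c (Suc k) * x (Suc k)) 0 / 2"
  using \<open>k < a\<close>
proof (induction k)
  case 0
  then show ?case using x_0 gamma_nonneg by simp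
next
  case (Suc k)
  let ?X = "x (Suc k)" and ?c1 = "c (Suc k)" and ?c2 = "c (Suc (Suc k))"
  show ?case
  proof (cases "?X \<le> 0")
    case True
    then show ?thesis using gamma_nonneg by simp
  next
    case False
    have c1: "7/8 \<le> ?c1" and c2: "7/8 \<le> ?c2" using coeff_bounds by auto
    then have "0 < ?c1 * ?X" using False by simp
    then have "x k \<le> \<gamma> + ?c1 * ?X / 2" using Suc by simp
    then have left: "?c1 * x k \<le> \<gamma> + ?X / 2" using False by (intro coeff_mult_le) auto
    have "7/8 * (7/8) \<le> ?c2 * ?c2" using c2 by (intro mult_mono) auto
    then have right: "49/64 * ?X \<le> ?c2 * ?c2 * ?X"
      using False by (intro mult_right_mono) auto
    have "G (Suc k) = 2 * ?X - ?c1 * x k - ?c2 * x (Suc (Suc k)) + ?c2 * ?c2 * ?X"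
      using gradient[of "Suc k"] below[of "Suc k"] Suc.prems \<open>a \<le> n\<close>
      by (simp add: bidiag_adj_def bidiag_def algebra_simps)
    moreover have "G (Suc k) \<le> \<gamma>"
      using abs_gradient_le[of "Suc k"] Suc.prems \<open>a \<le> n\<close> by simp
    ultimately have "?X \<le> \<gamma> + ?c2 * x (Suc (Suc k)) / 2"
      using left right False by linarith
    then show ?thesis by (simp add: max_def)
  qed
qed

lemma le_of_le_coeff_mult:
  assumes "0 < R" "R \<le> c m * r"
  shows "R \<le> r"
proof -
  have c: "0 \<le> c m" "c m \<le> 1" using coeff_bounds[of m] by auto
  show ?thesis
  proof (cases "r \<le> 0")
    case True
    then have "c m * r \<le> 0" using c by (simp add: mult_nonneg_nonpos)
    then show ?thesis using assms by linarith
  next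
    case False
    then have "c m * r \<le> r" using c by (simp add: mult_left_le_one_le)
    then show ?thesis using assms by linarith
  qed
qed

lemma forward_growth:
  assumes a: "a \<in> {1..<n}" and x_a: "31/32 * y a < x a"
    and R: "\<gamma> < R" "y a \<le> 16 * R" and r_Suc_a: "R \<le> bidiag c x (Suc a)"
    and m: "Suc a \<le> m" "m \<le> n"
  shows "R \<le> bidiag c x m \<and> R \<le> x m \<and> 33/32 * y m < x m"
  using m
proof (induction m rule: dec_induct)
  case base
  have c: "7/8 \<le> c (Suc a)" "c (Suc a) \<le> 1" using coeff_bounds by auto
  have y_a: "0 < y a" using y_pos a by auto
  have "31/32 * (c (Suc a) * y a) < c (Suc a) * x a"
    using x_a c by (simp add: mult.left_commute)
  moreover have "c (Suc a) * y a \<le> y a" using c y_a by simp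
  moreover have "0 \<le> c (Suc a) * x a" using c x_a y_a by simp
  moreover have "x (Suc a) = c (Suc a) * x a + bidiag c x (Suc a)" by (simp add: bidiag_def)
  ultimately show ?case using y_Suc[OF a] r_Suc_a R by linarith
next
  case (step m)
  have m: "m \<in> {1..<n}" "Suc m \<in> {1..n}" using step.hyps step.prems a by auto
  have c: "7/8 \<le> c (Suc m)" "c (Suc m) \<le> 1" using coeff_bounds by auto
  have IH: "R \<le> bidiag c x m" "R \<le> x m" "33/32 * y m < x m" using step by auto
  have "0 < y m" using y_pos m by auto
  then have "x m \<notin> bump (y m)" using IH(3) by (simp add: bump_def)
  then have "u m = x m" using u_outside_bump m by auto
  moreover have "G m \<le> \<gamma>" using abs_gradient_le[of m] m by simp
  ultimately have "R \<le> c (Suc m) * bidiag c x (Suc m)"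
    using coeff_mult_bidiag_Suc[OF m(1)] IH R(1) by linarith
  then have r_Suc: "R \<le> bidiag c x (Suc m)"
    by (rule le_of_le_coeff_mult[rotated]) (use R gamma_nonneg in linarith)
  have "33/32 * (c (Suc m) * y m) \<le> c (Suc m) * x m"
    using IH(3) c by (simp add: mult.left_commute)
  moreover have "0 \<le> c (Suc m) * x m" using c IH R gamma_nonneg by auto
  moreover have "x (Suc m) = c (Suc m) * x m + bidiag c x (Suc m)" by (simp add: bidiag_def)
  ultimately show ?case using y_Suc[OF m(1)] r_Suc R gamma_nonneg by linarith
qed

lemma bidiag_at_first_bump:
  assumes a: "a \<in> {1..n}" "0 < x a" and below: "\<And>m. m \<in> {1..<a} \<Longrightarrow> u m = x m"
  shows "x a / 2 - \<gamma> \<le> bidiag c x a"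
proof -
  have "0 < c a * x a" using coeff_bounds[of a] a(2) by simp
  then have "x (a - 1) \<le> \<gamma> + c a * x a / 2"
    using backward_bound[of a "a - 1"] below a(1) by simp
  then have "c a * x (a - 1) \<le> \<gamma> + x a / 2" using a(2) by (intro coeff_mult_le) auto
  then show ?thesis by (simp add: bidiag_def)
qed

(* Below the first window u = x, and the gradient equations keep x small there (backward_bound),
   so the residual at a is about x_a / 2. If gamma were small, the residuals and the coordinates
   beyond a would stay above R = 31/64 y_a - 2 gamma, pushing every later coordinate above its
   window, and the last gradient entry would exceed gamma. *)
lemma first_bump_bound:
  assumes a: "a \<in> {1..n}" "x a \<in> bump (y a)"
    and before: "\<And>m. m \<in> {1..<a} \<Longrightarrow> x m \<notin> bump (y m)"
  shows "y a \<le> 10 * \<gamma>"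
proof (rule ccontr)
  assume "\<not> y a \<le> 10 * \<gamma>"
  then have small: "10 * \<gamma> < y a" by simp
  have x_a: "31/32 * y a < x a" using a(2) by (simp add: bump_def)
  have r_a: "x a / 2 - \<gamma> \<le> bidiag c x a"
    using a(1) x_a y_pos[OF a(1)] u_outside_bump before
    by (intro bidiag_at_first_bump) auto
  have u_a: "0 \<le> u a" using u_in_bump a by auto
  have G_n: "G n \<le> \<gamma>" using abs_gradient_le[of n] a(1) by simp
  show False
  proof (cases "a = n")
    case True
    then show False using gradient_last a(1) r_a u_a G_n x_a small gamma_nonneg by simp
  next
    case False
    define R where "R = 31/64 * y a - 2 * \<gamma>"
    have a': "a \<in> {1..<n}" using a(1) False by auto
    have "G a \<le> \<gamma>" using abs_gradient_le a(1) by (simp add: abs_le_iff)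
    then have "R \<le> c (Suc a) * bidiag c x (Suc a)"
      using coeff_mult_bidiag_Suc[OF a'] r_a u_a x_a by (simp add: R_def)
    moreover have R: "\<gamma> < R" "y a \<le> 16 * R" using small gamma_nonneg by (simp_all add: R_def)
    ultimately have "R \<le> bidiag c x (Suc a)"
      using le_of_le_coeff_mult gamma_nonneg by force
    then have "R \<le> bidiag c x n \<and> R \<le> x n \<and> 33/32 * y n < x n"
      by (rule forward_growth[OF a' x_a R]) (use a' in auto)
    moreover have "x n \<notin> bump (y n)"
      using calculation by (simp add: bump_def)
    then have "G n = bidiag c x n + x n"
      using gradient_last u_outside_bump a(1) by auto
    ultimately show False using G_n small gamma_nonneg by (simp add: R_def)
  qed
qed

lemma inner_gradient_ge:
  "(\<Sum>m=1..n. (bidiag c x m)\<^sup>2) + (\<Sum>m=1..n. if x m \<in> bump (y m) then 0 else (x m)\<^sup>2)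
    \<le> (\<Sum>m=1..n. G m * x m)"
proof -
  have "(\<Sum>m=1..n. G m * x m)
      = (\<Sum>m=1..n. bidiag_adj c n (bidiag c x) m * x m) + (\<Sum>m=1..n. u m * x m)"
    by (simp add: gradient distrib_right sum.distrib)
  also have "(\<Sum>m=1..n. bidiag_adj c n (bidiag c x) m * x m) = (\<Sum>m=1..n. (bidiag c x m)\<^sup>2)"
    using sum_bidiag_adj[of x, OF x_0] by (simp add: power2_eq_square)
  finally have inner: "(\<Sum>m=1..n. G m * x m) = (\<Sum>m=1..n. (bidiag c x m)\<^sup>2) + (\<Sum>m=1..n. u m * x m)" .
  have "(if x m \<in> bump (y m) then 0 else (x m)\<^sup>2) \<le> u m * x m" if "m \<in> {1..n}" for m
  proof (cases "x m \<in> bump (y m)")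
    case True
    then have "0 < x m" using y_pos[OF that] by (simp add: bump_def)
    with True show ?thesis using u_in_bump[OF that] by simp
  qed (simp add: u_outside_bump[OF that] power2_eq_square)
  then show ?thesis unfolding inner by (intro add_left_mono sum_mono)
qed

lemma inner_gradient_le: "(\<Sum>m=1..n. G m * x m) \<le> \<gamma> * vnorm n x"
proof -
  have "(\<Sum>m=1..n. G m * x m) \<le> (\<Sum>m=1..n. \<bar>G m\<bar> * \<bar>x m\<bar>)"
    by (intro sum_mono) (simp add: abs_mult[symmetric])
  also have "\<dots> \<le> vnorm n G * vnorm n x"
    unfolding vnorm_eq_L2_set by (rule L2_set_mult_ineq)
  also have "\<dots> \<le> \<gamma> * vnorm n x"
    using gradient_norm by (intro mult_right_mono vnorm_nonneg)
  finally show ?thesis .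
qed

lemma bump_mass_le_tail:
  assumes a: "a \<in> {1..n}" and least: "\<And>m. m \<in> {1..n} \<Longrightarrow> x m \<in> bump (y m) \<Longrightarrow> a \<le> m"
  shows "(\<Sum>m=1..n. if x m \<in> bump (y m) then (x m)\<^sup>2 else 0) \<le> (33/32)\<^sup>2 * (\<Sum>m=a..n. (y m)\<^sup>2)"
proof -
  have "(\<Sum>m=1..n. if x m \<in> bump (y m) then (x m)\<^sup>2 else 0)
      \<le> (\<Sum>m=1..n. if a \<le> m then (33/32)\<^sup>2 * (y m)\<^sup>2 else 0)"
  proof (intro sum_mono)
    fix m assume m: "m \<in> {1..n}"
    show "(if x m \<in> bump (y m) then (x m)\<^sup>2 else 0) \<le> (if a \<le> m then (33/32)\<^sup>2 * (y m)\<^sup>2 else 0)"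
    proof (cases "x m \<in> bump (y m)")
      case True
      then have "(x m)\<^sup>2 \<le> (33/32 * y m)\<^sup>2"
        using y_pos[OF m] by (intro power_mono) (auto simp: bump_def)
      then have "(x m)\<^sup>2 \<le> (33/32)\<^sup>2 * (y m)\<^sup>2" by (simp only: power_mult_distrib)
      then show ?thesis using True least[OF m] by simp
    qed simp
  qed
  also have "\<dots> = (33/32)\<^sup>2 * (\<Sum>m=a..n. (y m)\<^sup>2)"
  proof -
    have "{m \<in> {1..n}. a \<le> m} = {a..n}" using a by auto
    then show ?thesis by (simp add: sum.inter_filter[symmetric] sum_distrib_left)
  qed
  finally show ?thesis .
qed

lemma bump_mass_le:
  assumes tail: "\<And>a. a \<in> {1..n} \<Longrightarrow> (\<Sum>m=a..n. (y m)\<^sup>2) \<le> K * (y a)\<^sup>2" and "0 \<le> K"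
  shows "(\<Sum>m=1..n. if x m \<in> bump (y m) then (x m)\<^sup>2 else 0) \<le> 107 * K * \<gamma>\<^sup>2"
proof (cases "\<exists>m\<in>{1..n}. x m \<in> bump (y m)")
  case False
  then show ?thesis using \<open>0 \<le> K\<close> by simp
next
  case True
  define a where "a = (LEAST m. m \<in> {1..n} \<and> x m \<in> bump (y m))"
  have a: "a \<in> {1..n}" "x a \<in> bump (y a)"
    using LeastI_ex[OF True[unfolded Bex_def]] by (simp_all add: a_def)
  have least: "a \<le> m" if "m \<in> {1..n}" "x m \<in> bump (y m)" for m
    using that by (simp add: a_def Least_le)
  have "(y a)\<^sup>2 \<le> (10 * \<gamma>)\<^sup>2"
    using a least y_pos[OF a(1)] by (intro power_mono first_bump_bound) force+
  then have y_a: "K * (y a)\<^sup>2 \<le> K * (10 * \<gamma>)\<^sup>2" using \<open>0 \<le> K\<close> by (rule mult_left_mono)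
  have "(\<Sum>m=1..n. if x m \<in> bump (y m) then (x m)\<^sup>2 else 0) \<le> (33/32)\<^sup>2 * (\<Sum>m=a..n. (y m)\<^sup>2)"
    by (rule bump_mass_le_tail[OF a(1) least])
  also have "\<dots> \<le> (33/32)\<^sup>2 * (K * (10 * \<gamma>)\<^sup>2)"
    using tail[OF a(1)] y_a by (intro mult_left_mono) auto
  also have "\<dots> \<le> 107 * K * \<gamma>\<^sup>2"
  proof -
    have "(33/32)\<^sup>2 * 100 * (K * \<gamma>\<^sup>2) \<le> 107 * (K * \<gamma>\<^sup>2)"
      using \<open>0 \<le> K\<close> by (intro mult_right_mono) (auto simp: power2_eq_square)
    then show ?thesis by (simp add: power_mult_distrib mult_ac)
  qed
  finally show ?thesis .
qed

lemma sum_sq_bidiag_add_sum_sq_le: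
  assumes tail: "\<And>a. a \<in> {1..n} \<Longrightarrow> (\<Sum>m=a..n. (y m)\<^sup>2) \<le> K * (y a)\<^sup>2" and "1 \<le> K"
  shows "(\<Sum>m=1..n. (bidiag c x m)\<^sup>2) + (\<Sum>m=1..n. (x m)\<^sup>2) \<le> 214 * K * \<gamma>\<^sup>2"
proof -
  define E where "E = (\<Sum>m=1..n. (bidiag c x m)\<^sup>2) + (\<Sum>m=1..n. if x m \<in> bump (y m) then 0 else (x m)\<^sup>2)"
  define W where "W = (\<Sum>m=1..n. if x m \<in> bump (y m) then (x m)\<^sup>2 else 0)"
  have split: "(\<Sum>m=1..n. (x m)\<^sup>2) = (\<Sum>m=1..n. if x m \<in> bump (y m) then 0 else (x m)\<^sup>2) + W"
    unfolding W_def sum.distrib[symmetric] by (intro sum.cong) auto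
  have "E \<le> \<gamma> * vnorm n x"
    using inner_gradient_ge inner_gradient_le unfolding E_def by (rule order_trans)
  also have "\<dots> \<le> \<gamma> * sqrt (E + W)"
    using gamma_nonneg split
    by (intro mult_left_mono) (simp_all add: vnorm_def E_def sum_nonneg)
  finally have "E \<le> \<gamma> * sqrt (E + W)" .
  moreover have "W \<le> 107 * K * \<gamma>\<^sup>2"
    unfolding W_def using tail \<open>1 \<le> K\<close> by (intro bump_mass_le) auto
  ultimately have "E + W \<le> 2 * (107 * K) * \<gamma>\<^sup>2"
    using \<open>1 \<le> K\<close> by (intro add_le_of_le_mult_sqrt) (auto simp: E_def W_def sum_nonneg)
  then show ?thesis unfolding split E_def by linarith
qed

end

lemma sum_power_div_le:
  fixes \<rho> :: real
  assumes "0 \<le> \<rho>" "\<rho> < 1" "T \<ge> 1"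
  shows "(\<Sum>k\<le>N. \<rho> ^ (k div T)) \<le> T / (1 - \<rho>)"
proof -
  have "Suc N \<le> Suc N * T" using mult_le_mono2[OF assms(3), of "Suc N"] by simp
  then have "(\<Sum>k\<le>N. \<rho> ^ (k div T)) \<le> (\<Sum>k<Suc N * T. \<rho> ^ (k div T))"
    using assms(1) by (intro sum_mono2) auto
  also have "\<dots> = (\<Sum>j<Suc N. \<Sum>k\<in>{j*T..<j*T + T}. \<rho> ^ (k div T))"
    by (rule sum.nat_group[symmetric])
  also have "\<dots> = T * (\<Sum>j<Suc N. \<rho> ^ j)"
  proof -
    have "(\<Sum>k\<in>{j*T..<j*T + T}. \<rho> ^ (k div T)) = T * \<rho> ^ j" for j
    proof -
      have "k div T = j" if "k \<in> {j*T..<j*T + T}" for k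
        using that by (auto intro: div_nat_eqI simp: mult.commute)
      then show ?thesis by simp
    qed
    then show ?thesis by (simp add: sum_distrib_left del: sum.lessThan_Suc)
  qed
  also have "\<dots> \<le> T * (1 / (1 - \<rho>))"
  proof (rule mult_left_mono)
    have "(\<Sum>j<Suc N. \<rho> ^ j) = (1 - \<rho> ^ Suc N) / (1 - \<rho>)"
      using assms(2) by (simp add: sum_gp_strict del: sum.lessThan_Suc)
    also have "\<dots> \<le> 1 / (1 - \<rho>)"
      using assms(1,2) by (intro divide_right_mono) auto
    finally show "(\<Sum>j<Suc N. \<rho> ^ j) \<le> 1 / (1 - \<rho>)" .
  qed simp
  finally show ?thesis by simp
qed

lemma yvec_tail_le:
  assumes "T \<ge> 1" "a \<in> {1..T*t}"
  shows "(\<Sum>m=a..T*t. (yvec T t m)\<^sup>2) \<le> 64/15 * T * (yvec T t a)\<^sup>2"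
proof -
  let ?\<rho> = "49/64 :: real"
  have sq: "(yvec T t m)\<^sup>2 = ?\<rho> ^ ((m - 1) div T)" if "m \<in> {1..T*t}" for m
    using that by (simp add: yvec_def power_mult_distrib[symmetric] power2_eq_square flip: power_mult)
  have each: "(yvec T t m)\<^sup>2 \<le> (yvec T t a)\<^sup>2 * ?\<rho> ^ ((m - a) div T)" if "m \<in> {a..T*t}" for m
  proof -
    have "(a - 1) div T + (m - a) div T \<le> (m - 1) div T"
      using that assms(2) div_add1_eq[of "a - 1" "m - a" T] by simp
    then have "?\<rho> ^ ((m - 1) div T) \<le> ?\<rho> ^ ((a - 1) div T + (m - a) div T)"
      by (intro power_decreasing) auto
    then show ?thesis using that assms(2) by (simp add: sq power_add)
  qed
  then have "(\<Sum>m=a..T*t. (yvec T t m)\<^sup>2) \<le> (yvec T t a)\<^sup>2 * (\<Sum>m=a..T*t. ?\<rho> ^ ((m - a) div T))"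
    unfolding sum_distrib_left by (intro sum_mono each)
  also have "\<dots> \<le> (yvec T t a)\<^sup>2 * (T / (1 - ?\<rho>))"
  proof (rule mult_left_mono)
    have "(\<Sum>m=a..T*t. ?\<rho> ^ ((m - a) div T)) = (\<Sum>k\<le>T*t - a. ?\<rho> ^ (k div T))"
      using assms(2) sum.shift_bounds_cl_nat_ivl[of "\<lambda>m. ?\<rho> ^ ((m - a) div T)" 0 a "T*t - a"]
      by (simp add: atLeast0AtMost)
    also have "\<dots> \<le> T / (1 - ?\<rho>)"
      using assms(1) by (intro sum_power_div_le) auto
    finally show "(\<Sum>m=a..T*t. ?\<rho> ^ ((m - a) div T)) \<le> T / (1 - ?\<rho>)" .
  qed simp
  finally show ?thesis by (simp add: mult_ac)
qed

lemma gfun_PL_bound: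
  assumes "T \<ge> 1" "x \<in> vecs (T*t)"
  shows "2 * gfun T t x \<le> 1000 * T * (vnorm (T*t) (gfun_grad T t x))\<^sup>2"
proof -
  let ?n = "T*t" and ?c = "chain_coeff T" and ?y = "yvec T t" and ?\<gamma> = "vnorm (T*t) (gfun_grad T t x)"
  interpret chain_gradient ?n ?c x "\<lambda>m. vfun_deriv (?y m) (x m)" "gfun_grad T t x" ?y ?\<gamma>
  proof
    show "x 0 = 0" using assms(2) by (rule vecs_0)
  qed (auto simp: chain_coeff_def gfun_grad_def yvec_pos yvec_Suc vfun_deriv_outside_bump
      vfun_deriv_nonneg_in_bump)
  have "(\<Sum>m=1..?n. (bidiag ?c x m)\<^sup>2) + (\<Sum>m=1..?n. (x m)\<^sup>2) \<le> 214 * (64/15 * T) * ?\<gamma>\<^sup>2"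
    using assms(1) yvec_tail_le by (intro sum_sq_bidiag_add_sum_sq_le) auto
  moreover have "2 * gfun T t x \<le> (\<Sum>m=1..?n. (bidiag ?c x m)\<^sup>2) + (\<Sum>m=1..?n. (x m)\<^sup>2)"
  proof -
    have "(\<Sum>m=1..?n. vfun (?y m) (x m)) \<le> (\<Sum>m=1..?n. (x m)\<^sup>2) / 2"
      unfolding sum_divide_distrib by (intro sum_mono vfun_le_half_sq yvec_pos)
    moreover have "gfun T t x = 1/2 * (\<Sum>m=1..?n. (bidiag ?c x m)\<^sup>2) + (\<Sum>m=1..?n. vfun (?y m) (x m))"
      unfolding gfun_def qfun_eq_bidiag[where x=x and t=t, OF assms(1) x_0] ..
    ultimately show ?thesis by linarith
  qed
  moreover have "214 * (64/15 * T) * ?\<gamma>\<^sup>2 \<le> 1000 * T * ?\<gamma>\<^sup>2"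
    by (intro mult_right_mono) auto
  ultimately show ?thesis by linarith
qed

lemma gfun_PL_cond:
  assumes "T \<ge> 1"
  shows "PL_cond (T*t) (1 / (1000 * real T)) (gfun T t)"
  unfolding PL_cond_def
proof (intro conjI ballI differentiable_gfun[OF assms])
  show "0 < 1 / (1000 * real T)" using assms by simp
  fix x assume x: "x \<in> vecs (T*t)"
  have "2 * (1 / (1000 * real T)) * (gfun T t x - (INF z\<in>vecs (T*t). gfun T t z))
      = 2 * gfun T t x / (1000 * real T)"
    by (simp add: gfun_INF)
  also have "\<dots> \<le> (vnorm (T*t) (grad (T*t) (gfun T t) x))\<^sup>2"
    using gfun_PL_bound[OF assms x] assms by (simp add: grad_gfun[OF assms x] pos_divide_le_eq mult_ac)
  finally show "2 * (1 / (1000 * real T)) * (gfun T t x - (INF z\<in>vecs (T*t). gfun T t z))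
      \<le> (vnorm (T*t) (grad (T*t) (gfun T t) x))\<^sup>2" .
qed

theorem lemma1:
  shows "(\<forall>T t. T \<ge> 1 \<longrightarrow> t \<ge> 1 \<longrightarrow>
            zero_chain (T*t) (\<lambda>x. gfun T t (\<lambda>i. yvec T t i - x i))
          \<and> (\<forall>x\<in>vecs (T*t). gfun T t (\<lambda>_. 0) \<le> gfun T t x)
          \<and> (INF x\<in>vecs (T*t). gfun T t x) = 0
          \<and> (\<forall>x\<in>vecs (T*t). gfun T t x \<le> 1/2 * (\<Sum>i=1..T*t. \<Sum>j=1..T*t.
                 x i * (Bmat T t i j + (if i = j then 1 else 0)) * x j))
          \<and> L_smooth (T*t) 37 (gfun T t))
       \<and> (\<exists>C3>0. \<forall>T t. T \<ge> 1 \<longrightarrow> t \<ge> 1 \<longrightarrow> PL_cond (T*t) (1 / (C3 * real T)) (gfun T t))"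
proof (intro conjI allI impI)
  fix T t :: nat assume T: "T \<ge> 1"
  show "zero_chain (T*t) (\<lambda>x. gfun T t (\<lambda>i. yvec T t i - x i))"
    by (rule zero_chain_gfun_reflected[OF T])
  show "\<forall>x\<in>vecs (T*t). gfun T t (\<lambda>_. 0) \<le> gfun T t x"
    by (simp add: gfun_zero gfun_nonneg)
  show "(INF x\<in>vecs (T*t). gfun T t x) = 0"
    by (rule gfun_INF)
  show "\<forall>x\<in>vecs (T*t). gfun T t x \<le> 1/2 * (\<Sum>i=1..T*t. \<Sum>j=1..T*t.
      x i * (Bmat T t i j + (if i = j then 1 else 0)) * x j)"
    using gfun_le_quadratic[OF T] by blast
  show "L_smooth (T*t) 37 (gfun T t)"
    by (rule gfun_L_smooth[OF T])
next
  show "\<exists>C3>0. \<forall>T t. T \<ge> 1 \<longrightarrow> t \<ge> 1 \<longrightarrow> PL_cond (T*t) (1 / (C3 * real T)) (gfun T t)"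
    using gfun_PL_cond by (intro exI[of _ 1000]) auto
qed

end
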